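(* Let $(\gamma_\nu)_{\nu\ge 0}$ be complex numbers, let $f(z)=\sum_{\nu=0}^{\infty}\gamma_\nu z^\nu$ be the corresponding formal power series, and let $f_n(z)=\sum_{\nu=0}^{n}\gamma_\nu z^\nu$. Work in the field $\mathbb{C}((z))$ of formal Laurent series. Define numbers $\mathcal{C}_k^{(n)}$ by $\mathcal{C}_0^{(n)}=-\gamma_{n+1}$ and $\mathcal{C}_{k+1}^{(n)}=\mathcal{C}_k^{(n+3)}-\dfrac{\mathcal{C}_k^{(n+2)}\bigl\{2\mathcal{C}_k^{(n)}\mathcal{C}_k^{(n+2)}-[\mathcal{C}_k^{(n+1)}]^2\bigr\}}{\mathcal{C}_k^{(n)}\mathcal{C}_k^{(n+1)}}$ for $k,n\in\mathbb{N}_0$, and assume $\mathcal{C}_k^{(n)}\neq0$ for all $k,n\in\mathbb{N}_0$. Let $\mathcal{J}_k^{(n)}$ be the iterated theta algorithm applied to $s_n=f_n(z)$: $\mathcal{J}_0^{(n)}=f_n(z)$, $\mathcal{J}_{k+1}^{(n)}=\mathcal{J}_k^{(n+1)}-\dfrac{[\Delta\mathcal{J}_k^{(n)}][\Delta\mathcal{J}_k^{(n+1)}][\Delta^2\mathcal{J}_k^{(n+1)}]}{[\Delta\mathcal{J}_k^{(n+2)}][\Delta^2\mathcal{J}_k^{(n)}]-[\Delta\mathcal{J}_k^{(n)}][\Delta^2\mathcal{J}_k^{(n+1)}]}$, where $\Delta$ acts on the superscript, $\Delta\mathcal{J}_k^{(n)}=\mathcal{J}_k^{(n+1)}-\mathcal{J}_k^{(n)}$.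 Then all $\mathcal{J}_k^{(n)}$ are well defined elements of $\mathbb{C}[[z]]$, and for all $k,n\in\mathbb{N}_0$: (i) $\mathcal{J}_k^{(n)}=f(z)+z^{n+3k+1}\mathcal{R}_k^{(n)}(z)$ with $\mathcal{R}_k^{(n)}(z)\in\mathbb{C}[[z]]$ having constant term $\mathcal{C}_k^{(n)}$; in particular $f(z)-\mathcal{J}_k^{(n)}=O(z^{n+3k+1})$; (ii) $\mathcal{J}_k^{(n)}=f_{n+3k}(z)+\mathcal{G}_k^{(n)}z^{n+3k+1}+O(z^{n+3k+2})$, where $\mathcal{G}_k^{(n)}=\mathcal{C}_k^{(n)}+\gamma_{n+3k+1}$ and $\mathcal{G}_0^{(n)}=0$, $\mathcal{G}_1^{(n)}=-\gamma_{n+3}\bigl\{\gamma_{n+2}^2-2\gamma_{n+1}\gamma_{n+3}\bigr\}/(\gamma_{n+1}\gamma_{n+2})$, and $\mathcal{G}_{k+1}^{(n)}=\mathcal{G}_k^{(n+3)}-F_{k+1}^{(n)}/H_{k+1}^{(n)}$ with $F_{k+1}^{(n)}=\bigl[\gamma_{n+3k+3}-\mathcal{G}_k^{(n+2)}\bigr]\Bigl\{\bigl[\gamma_{n+3k+2}-\mathcal{G}_k^{(n+1)}\bigr]^2-2\bigl[\gamma_{n+3k+1}-\mathcal{G}_k^{(n)}\bigr]\bigl[\gamma_{n+3k+3}-\mathcal{G}_k^{(n+2)}\bigr]\Bigr\}$ and $H_{k+1}^{(n)}=\bigl[\gamma_{n+3k+1}-\mathcal{G}_k^{(n)}\bigr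]\bigl[\gamma_{n+3k+2}-\mathcal{G}_k^{(n+1)}\bigr]$.
   Context: $\mathbb{N}_0=\{0,1,2,\dots\}$. $O(z^m)$ denotes an element of $z^m\mathbb{C}[[z]]$. The number $\mathcal{G}_k^{(n)}$ is interpreted as the prediction for the coefficient $\gamma_{n+3k+1}$, the first coefficient not used in computing $\mathcal{J}_k^{(n)}$ (which uses $f_n,\dots,f_{n+3k}$). *)

theory Defs
  imports Complex_Main "HOL-Computational_Algebra.Formal_Laurent_Series"
begin

definition fser :: "(nat \<Rightarrow> complex) \<Rightarrow> complex fps" where
  "fser \<gamma> = Abs_fps \<gamma>"

definition fpart :: "(nat \<Rightarrow> complex) \<Rightarrow> nat \<Rightarrow> complex fps" where
  "fpart \<gamma> n = Abs_fps (\<lambda>\<nu>. if \<nu> \<le> n then \<gamma> \<nu> else 0)"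

fun Cc :: "(nat \<Rightarrow> complex) \<Rightarrow> nat \<Rightarrow> nat \<Rightarrow> complex" where
  "Cc \<gamma> 0 n = - \<gamma> (n + 1)"
| "Cc \<gamma> (Suc k) n = Cc \<gamma> k (n + 3)
     - Cc \<gamma> k (n + 2) * (2 * Cc \<gamma> k n * Cc \<gamma> k (n + 2) - (Cc \<gamma> k (n + 1))\<^sup>2)
       / (Cc \<gamma> k n * Cc \<gamma> k (n + 1))"

definition Gc :: "(nat \<Rightarrow> complex) \<Rightarrow> nat \<Rightarrow> nat \<Rightarrow> complex" where
  "Gc \<gamma> k n = Cc \<gamma> k n + \<gamma> (n + 3 * k + 1)"

definition fwd_diff :: "(nat \<Rightarrow> complex fls) \<Rightarrow> nat \<Rightarrow> complex fls" where
  "fwd_diff s n = s (n + 1) - s n"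

definition fwd_diff2 :: "(nat \<Rightarrow> complex fls) \<Rightarrow> nat \<Rightarrow> complex fls" where
  "fwd_diff2 s n = fwd_diff (fwd_diff s) n"

definition theta_den :: "(nat \<Rightarrow> complex fls) \<Rightarrow> nat \<Rightarrow> complex fls" where
  "theta_den s n = fwd_diff s (n + 2) * fwd_diff2 s n - fwd_diff s n * fwd_diff2 s (n + 1)"

definition theta_step :: "(nat \<Rightarrow> complex fls) \<Rightarrow> nat \<Rightarrow> complex fls" where
  "theta_step s n = s (n + 1)
     - fwd_diff s n * fwd_diff s (n + 1) * fwd_diff2 s (n + 1) / theta_den s n"

fun Jt :: "(nat \<Rightarrow> complex) \<Rightarrow> nat \<Rightarrow> nat \<Rightarrow> complex fls" where
  "Jt \<gamma> 0 n = fps_to_fls (fpart \<gamma> n)"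
| "Jt \<gamma> (Suc k) n = theta_step (Jt \<gamma> k) n"

end

theory Submission
  imports Defs
begin

(* Write J_k^(n) = f + z^m R_k^(n) with m = n + 3k + 1.  Feeding four consecutive iterates
   s_j = f + w z^j r_j (w = z^m, r_j = R_k^(n+j)) into the theta step, the powers of z cancel:
   the denominator is w^2 z D and the new iterate is f + w z^3 N / D, where N and D are
   polynomials in z and the r_j (theta_rem_num and theta_rem_den below).  At z = 0, D reduces
   to C_k^(n) C_k^(n+1), which is nonzero, so D is a unit of C[[z]] and N / D is again a power
   series; its constant term N(0) / D(0) is precisely the recursion defining C_(k+1)^(n).
   Part (ii) just reads off the coefficient of z^m, and the formulas for G_k^(n) are the
   recursion for C_k^(n) rewritten via gamma_(n+3k+j) - G_k^(n+j-1) = - C_k^(n+j-1). *)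

definition theta_rem_den :: "'a::comm_ring_1 \<Rightarrow> 'a \<Rightarrow> 'a \<Rightarrow> 'a \<Rightarrow> 'a \<Rightarrow> 'a" where
  "theta_rem_den z r0 r1 r2 r3 =
     (z*r1 - r0) * (z*r2 - r1) - 2*z*(z*r1 - r0)*(z*r3 - r2) + z^2*(z*r2 - r1)*(z*r3 - r2)"

definition theta_rem_num :: "'a::comm_ring_1 \<Rightarrow> 'a \<Rightarrow> 'a \<Rightarrow> 'a \<Rightarrow> 'a \<Rightarrow> 'a" where
  "theta_rem_num z r0 r1 r2 r3 =
     2*(z*r1 - r0)*(r2^2 - r1*r3) + (z*r2 - r1)*(r1*(z*r3 - r2) - (z*r1 - r0)*r3)"

lemma theta_den_expansion:
  fixes F w z s0 s1 s2 s3 r0 r1 r2 r3 :: "'a::field"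
  assumes "s0 = F + w*r0" "s1 = F + w*z*r1" "s2 = F + w*z^2*r2" "s3 = F + w*z^3*r3"
  shows "(s3 - s2)*((s2 - s1) - (s1 - s0)) - (s1 - s0)*((s3 - s2) - (s2 - s1))
           = w^2 * z * theta_rem_den z r0 r1 r2 r3"
  unfolding assms theta_rem_den_def by (simp add: algebra_simps power2_eq_square power3_eq_cube)

lemma theta_step_expansion:
  fixes F w z s0 s1 s2 s3 r0 r1 r2 r3 :: "'a::field"
  assumes s: "s0 = F + w*r0" "s1 = F + w*z*r1" "s2 = F + w*z^2*r2" "s3 = F + w*z^3*r3"
    and nz: "w \<noteq> 0" "z \<noteq> 0" "theta_rem_den z r0 r1 r2 r3 \<noteq> 0"
  shows "s1 - (s1 - s0)*(s2 - s1)*((s3 - s2) - (s2 - s1))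
              / ((s3 - s2)*((s2 - s1) - (s1 - s0)) - (s1 - s0)*((s3 - s2) - (s2 - s1)))
           = F + w * z^3 * (theta_rem_num z r0 r1 r2 r3 / theta_rem_den z r0 r1 r2 r3)"
proof -
  define D where "D = theta_rem_den z r0 r1 r2 r3"
  define N where "N = theta_rem_num z r0 r1 r2 r3"
  have num: "(s1 - s0)*(s2 - s1)*((s3 - s2) - (s2 - s1)) = w^3 * z^2 * (r1 * D - z^2 * N)"
    unfolding s D_def N_def theta_rem_den_def theta_rem_num_def
    by (simp add: algebra_simps power2_eq_square power3_eq_cube)
  show ?thesis
    unfolding theta_den_expansion[OF s] num using nz
    by (simp add: D_def[symmetric] N_def[symmetric] s field_simps power2_eq_square power3_eq_cube)
qed

lemma fps_to_fls_theta_rem_den: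
  "fps_to_fls (theta_rem_den z r0 r1 r2 r3) =
     theta_rem_den (fps_to_fls z) (fps_to_fls r0) (fps_to_fls r1) (fps_to_fls r2) (fps_to_fls r3)"
  by (simp add: theta_rem_den_def fls_times_fps_to_fls fps_to_fls_power)

lemma fps_to_fls_theta_rem_num:
  "fps_to_fls (theta_rem_num z r0 r1 r2 r3) =
     theta_rem_num (fps_to_fls z) (fps_to_fls r0) (fps_to_fls r1) (fps_to_fls r2) (fps_to_fls r3)"
  by (simp add: theta_rem_num_def fls_times_fps_to_fls fps_to_fls_power)

lemma theta_rem_den_nth_0:
  "theta_rem_den z r0 r1 r2 r3 $ 0 = theta_rem_den (z $ 0) (r0 $ 0) (r1 $ 0) (r2 $ 0) (r3 $ 0)"
  by (simp add: theta_rem_den_def fps_power_zeroth)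

lemma theta_rem_num_nth_0:
  "theta_rem_num z r0 r1 r2 r3 $ 0 = theta_rem_num (z $ 0) (r0 $ 0) (r1 $ 0) (r2 $ 0) (r3 $ 0)"
  by (simp add: theta_rem_num_def fps_power_zeroth)

lemma theta_rem_den_zero [simp]: "theta_rem_den 0 r0 r1 r2 r3 = r0 * r1"
  by (simp add: theta_rem_den_def)

lemma theta_rem_num_zero [simp]:
  "theta_rem_num 0 r0 r1 r2 r3 = r0 * r1 * r3 - r2 * (2 * r0 * r2 - r1^2)"
  by (simp add: theta_rem_num_def algebra_simps power2_eq_square)

lemma theta_den_eq:
  "theta_den s n = (s (n+3) - s (n+2)) * ((s (n+2) - s (n+1)) - (s (n+1) - s n))
                   - (s (n+1) - s n) * ((s (n+3) - s (n+2)) - (s (n+2) - s (n+1)))"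
  by (simp add: theta_den_def fwd_diff2_def fwd_diff_def add.assoc eval_nat_numeral)

lemma theta_step_eq:
  "theta_step s n = s (n+1) - (s (n+1) - s n) * (s (n+2) - s (n+1))
     * ((s (n+3) - s (n+2)) - (s (n+2) - s (n+1))) / theta_den s n"
  by (simp add: theta_step_def fwd_diff2_def fwd_diff_def add.assoc eval_nat_numeral)

lemma theta_step_remainder:
  fixes s :: "nat \<Rightarrow> complex fls" and f :: "complex fps" and R :: "nat \<Rightarrow> complex fps"
  assumes s: "\<And>j. j \<le> 3 \<Longrightarrow> s (n + j) = fps_to_fls (f + fps_X ^ (m + j) * R j)"
    and nz: "R 0 $ 0 * R 1 $ 0 \<noteq> 0"
  defines "D \<equiv> theta_rem_den fps_X (R 0) (R 1) (R 2) (R 3)"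
      and "N \<equiv> theta_rem_num fps_X (R 0) (R 1) (R 2) (R 3)"
  shows "theta_den s n \<noteq> 0" and "theta_step s n = fps_to_fls (f + fps_X ^ (m + 3) * (N / D))"
proof -
  define w :: "complex fls" where "w = fls_X ^ m"
  have sj: "s (n + j) = fps_to_fls f + w * fls_X ^ j * fps_to_fls (R j)" if "j \<le> 3" for j
    using s[OF that] by (simp add: w_def fls_times_fps_to_fls fps_to_fls_power power_add)
  have expansion: "s n = fps_to_fls f + w * fps_to_fls (R 0)"
      "s (n+1) = fps_to_fls f + w * fls_X * fps_to_fls (R 1)"
      "s (n+2) = fps_to_fls f + w * fls_X^2 * fps_to_fls (R 2)"
      "s (n+3) = fps_to_fls f + w * fls_X^3 * fps_to_fls (R 3)"
    using sj[of 0] sj[of 1] sj[of 2] sj[of 3] by simp_all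
  have D0: "D $ 0 \<noteq> 0"
    using nz by (simp add: D_def theta_rem_den_nth_0)
  hence "fps_to_fls D \<noteq> 0"
    by auto
  hence D_fls: "theta_rem_den fls_X (fps_to_fls (R 0)) (fps_to_fls (R 1))
                  (fps_to_fls (R 2)) (fps_to_fls (R 3)) \<noteq> 0"
    by (metis D_def fps_to_fls_theta_rem_den fps_X_to_fls)
  show "theta_den s n \<noteq> 0"
    unfolding theta_den_eq theta_den_expansion[OF expansion] w_def using D_fls by simp
  have quotient: "fps_to_fls (N / D) = fps_to_fls N / fps_to_fls D"
    using D0 by (simp add: fls_divide_fps_to_fls)
  have "w \<noteq> 0" "(fls_X :: complex fls) \<noteq> 0"
    by (simp_all add: w_def)
  have "theta_step s n = fps_to_fls f + w * fls_X^3 * (fps_to_fls N / fps_to_fls D)"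
    unfolding theta_step_eq theta_den_eq
      theta_step_expansion[OF expansion \<open>w \<noteq> 0\<close> \<open>fls_X \<noteq> 0\<close> D_fls]
    by (simp add: D_def N_def fps_to_fls_theta_rem_den fps_to_fls_theta_rem_num)
  also have "\<dots> = fps_to_fls (f + fps_X ^ (m + 3) * (N / D))"
    by (simp add: quotient w_def fls_times_fps_to_fls fps_to_fls_power power_add mult.assoc)
  finally show "theta_step s n = fps_to_fls (f + fps_X ^ (m + 3) * (N / D))" .
qed

lemma Cc_Suc_eq_theta_rem:
  assumes "Cc \<gamma> k n \<noteq> 0" "Cc \<gamma> k (n + 1) \<noteq> 0"
  shows "Cc \<gamma> (Suc k) n =
    theta_rem_num 0 (Cc \<gamma> k n) (Cc \<gamma> k (n + 1)) (Cc \<gamma> k (n + 2)) (Cc \<gamma> k (n + 3))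
    / theta_rem_den 0 (Cc \<gamma> k n) (Cc \<gamma> k (n + 1)) (Cc \<gamma> k (n + 2)) (Cc \<gamma> k (n + 3))"
  using assms by (simp add: field_simps power2_eq_square)

lemma fpart_eq_fps_cutoff: "fpart \<gamma> n = fps_cutoff (Suc n) (fser \<gamma>)"
  by (simp add: fps_eq_iff fpart_def fser_def)

lemma fpart_eq_fser_minus_tail:
  "fpart \<gamma> n = fser \<gamma> - fps_X ^ (n + 1) * fps_shift (n + 1) (fser \<gamma>)"
  unfolding fpart_eq_fps_cutoff Suc_eq_plus1
  by (metis fps_shift_cutoff' add_diff_cancel_left')

lemma Jt_Suc_remainder:
  fixes \<gamma> :: "nat \<Rightarrow> complex"
  assumes nz: "Cc \<gamma> k n \<noteq> 0" "Cc \<gamma> k (n + 1) \<noteq> 0"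
    and level_k: "\<And>n. \<exists>R. Jt \<gamma> k n = fps_to_fls (fser \<gamma> + fps_X ^ (n + 3 * k + 1) * R)
                         \<and> R $ 0 = Cc \<gamma> k n"
  shows "theta_den (Jt \<gamma> k) n \<noteq> 0"
    and "\<exists>R. Jt \<gamma> (Suc k) n = fps_to_fls (fser \<gamma> + fps_X ^ (n + 3 * Suc k + 1) * R)
             \<and> R $ 0 = Cc \<gamma> (Suc k) n"
proof -
  obtain R where R: "\<And>n. Jt \<gamma> k n = fps_to_fls (fser \<gamma> + fps_X ^ (n + 3 * k + 1) * R n)"
      "\<And>n. R n $ 0 = Cc \<gamma> k n"
    using level_k by metis
  have shifted: "Jt \<gamma> k (n + j) = fps_to_fls (fser \<gamma> + fps_X ^ ((n + 3 * k + 1) + j) * R (n + j))"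
    for j
    using R(1)[of "n + j"] by (simp add: algebra_simps)
  have "R (n + 0) $ 0 * R (n + 1) $ 0 \<noteq> 0"
    using nz by (simp add: R(2))
  note step = theta_step_remainder[where s = "Jt \<gamma> k" and f = "fser \<gamma>" and m = "n + 3 * k + 1"
      and R = "\<lambda>j. R (n + j)", OF shifted this]
  show "theta_den (Jt \<gamma> k) n \<noteq> 0"
    by (fact step(1))
  let ?D = "theta_rem_den fps_X (R n) (R (n + 1)) (R (n + 2)) (R (n + 3))"
  let ?N = "theta_rem_num fps_X (R n) (R (n + 1)) (R (n + 2)) (R (n + 3))"
  have "?D $ 0 \<noteq> 0"
    using nz by (simp add: theta_rem_den_nth_0 R(2))
  hence "(?N / ?D) $ 0 = ?N $ 0 / ?D $ 0"
    by (simp add: fps_divide_unit divide_inverse)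
  also have "\<dots> = Cc \<gamma> (Suc k) n"
    unfolding Cc_Suc_eq_theta_rem[OF nz] by (simp add: theta_rem_den_nth_0 theta_rem_num_nth_0 R(2))
  finally have "(?N / ?D) $ 0 = Cc \<gamma> (Suc k) n" .
  moreover have "Jt \<gamma> (Suc k) n = fps_to_fls (fser \<gamma> + fps_X ^ (n + 3 * Suc k + 1) * (?N / ?D))"
    using step(2) by (simp add: algebra_simps)
  ultimately show "\<exists>R. Jt \<gamma> (Suc k) n = fps_to_fls (fser \<gamma> + fps_X ^ (n + 3 * Suc k + 1) * R)
             \<and> R $ 0 = Cc \<gamma> (Suc k) n"
    by blast
qed

lemma Jt_remainder:
  fixes \<gamma> :: "nat \<Rightarrow> complex"
  assumes nz: "\<And>k n. Cc \<gamma> k n \<noteq> 0"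
  shows "\<exists>R. Jt \<gamma> k n = fps_to_fls (fser \<gamma> + fps_X ^ (n + 3 * k + 1) * R) \<and> R $ 0 = Cc \<gamma> k n"
proof (induction k arbitrary: n)
  case 0
  show ?case
    by (rule exI[of _ "- fps_shift (n + 1) (fser \<gamma>)"]) (simp add: fpart_eq_fser_minus_tail fser_def)
next
  case (Suc k)
  show ?case
    using Jt_Suc_remainder(2)[OF nz nz Suc] .
qed

lemma fser_plus_X_power_mult:
  "fser \<gamma> + fps_X ^ (m + 1) * R =
     fpart \<gamma> m + fps_const (\<gamma> (m + 1) + R $ 0) * fps_X ^ (m + 1)
     + fps_X ^ (m + 2) * (fps_shift (m + 2) (fser \<gamma>) + fps_shift 1 R)"
    (is "?lhs = ?rhs")
proof (rule fps_ext)
  fix i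
  have "?lhs $ i = \<gamma> i + (if i \<le> m then 0 else R $ (i - (m + 1)))"
    by (simp add: fser_def fps_X_power_mult_nth del: power_Suc)
  also have "\<dots> = ?rhs $ i"
  proof -
    consider "i \<le> m" | "i = m + 1" | "m + 2 \<le> i"
      by linarith
    then show ?thesis
    proof cases
      case 3
      then obtain j where "i = m + 2 + j"
        using le_Suc_ex by blast
      then show ?thesis
        by (simp add: fser_def fpart_def fps_X_power_mult_nth add.commute del: power_Suc)
    qed (simp_all add: fpart_def fps_X_power_mult_nth del: power_Suc)
  qed
  finally show "?lhs $ i = ?rhs $ i" .
qed

lemma Jt_expansion:
  fixes \<gamma> :: "nat \<Rightarrow> complex"
  assumes nz: "\<And>k n. Cc \<gamma> k n \<noteq> 0"
  shows "\<exists>E. Jt \<gamma> k n = fps_to_fls (fpart \<gamma> (n + 3 * k)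
             + fps_const (Gc \<gamma> k n) * fps_X ^ (n + 3 * k + 1) + fps_X ^ (n + 3 * k + 2) * E)"
proof -
  obtain R where "Jt \<gamma> k n = fps_to_fls (fser \<gamma> + fps_X ^ (n + 3 * k + 1) * R)" "R $ 0 = Cc \<gamma> k n"
    using Jt_remainder[OF nz] by blast
  then show ?thesis
    unfolding fser_plus_X_power_mult by (auto simp: Gc_def add.commute)
qed

lemma Gc_0: "Gc \<gamma> 0 n = 0"
  by (simp add: Gc_def)

lemma Gc_1:
  "Gc \<gamma> 1 n = - \<gamma> (n + 3) * ((\<gamma> (n + 2))\<^sup>2 - 2 * \<gamma> (n + 1) * \<gamma> (n + 3)) / (\<gamma> (n + 1) * \<gamma> (n + 2))"
proof -
  have "Gc \<gamma> 1 n = \<gamma> (n + 3) * (2 * \<gamma> (n + 1) * \<gamma> (n + 3) - (\<gamma> (n + 2))\<^sup>2) / (\<gamma> (n + 1) * \<gamma> (n + 2))"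
    by (simp add: Gc_def numeral_eq_Suc)
  then show ?thesis
    by (simp add: algebra_simps)
qed

lemma Gc_Suc:
  "Gc \<gamma> (Suc k) n = Gc \<gamma> k (n + 3)
     - ((\<gamma> (n + 3 * k + 3) - Gc \<gamma> k (n + 2))
         * ((\<gamma> (n + 3 * k + 2) - Gc \<gamma> k (n + 1))\<^sup>2
            - 2 * (\<gamma> (n + 3 * k + 1) - Gc \<gamma> k n) * (\<gamma> (n + 3 * k + 3) - Gc \<gamma> k (n + 2))))
       / ((\<gamma> (n + 3 * k + 1) - Gc \<gamma> k n) * (\<gamma> (n + 3 * k + 2) - Gc \<gamma> k (n + 1)))"
proof -
  have Cc_eqs: "\<gamma> (n + 3 * k + 1) - Gc \<gamma> k n = - Cc \<gamma> k n"
      "\<gamma> (n + 3 * k + 2) - Gc \<gamma> k (n + 1) = - Cc \<gamma> k (n + 1)"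
      "\<gamma> (n + 3 * k + 3) - Gc \<gamma> k (n + 2) = - Cc \<gamma> k (n + 2)"
      "Gc \<gamma> (Suc k) n = Cc \<gamma> (Suc k) n + \<gamma> (n + 3 * k + 4)"
      "Gc \<gamma> k (n + 3) = Cc \<gamma> k (n + 3) + \<gamma> (n + 3 * k + 4)"
    by (simp_all add: Gc_def algebra_simps eval_nat_numeral)
  show ?thesis
    unfolding Cc_eqs by (simp add: algebra_simps power2_eq_square)
qed

theorem mainTheorem2:
  fixes \<gamma> :: "nat \<Rightarrow> complex"
  assumes nz: "\<And>k n. Cc \<gamma> k n \<noteq> 0"
  shows "(\<forall>k n. theta_den (Jt \<gamma> k) n \<noteq> 0)
    \<and> (\<forall>k n. \<exists>R :: complex fps.
          Jt \<gamma> k n = fps_to_fls (fser \<gamma> + fps_X ^ (n + 3 * k + 1) * R)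
          \<and> fps_nth R 0 = Cc \<gamma> k n)
    \<and> (\<forall>k n. \<exists>E :: complex fps.
          Jt \<gamma> k n = fps_to_fls (fpart \<gamma> (n + 3 * k)
             + fps_const (Gc \<gamma> k n) * fps_X ^ (n + 3 * k + 1)
             + fps_X ^ (n + 3 * k + 2) * E))
    \<and> (\<forall>n. Gc \<gamma> 0 n = 0)
    \<and> (\<forall>n. Gc \<gamma> 1 n = - \<gamma> (n + 3) * ((\<gamma> (n + 2))\<^sup>2 - 2 * \<gamma> (n + 1) * \<gamma> (n + 3))
                         / (\<gamma> (n + 1) * \<gamma> (n + 2)))
    \<and> (\<forall>k n. Gc \<gamma> (Suc k) n = Gc \<gamma> k (n + 3)
          - ((\<gamma> (n + 3 * k + 3) - Gc \<gamma> k (n + 2))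
              * ((\<gamma> (n + 3 * k + 2) - Gc \<gamma> k (n + 1))\<^sup>2
                 - 2 * (\<gamma> (n + 3 * k + 1) - Gc \<gamma> k n) * (\<gamma> (n + 3 * k + 3) - Gc \<gamma> k (n + 2))))
            / ((\<gamma> (n + 3 * k + 1) - Gc \<gamma> k n) * (\<gamma> (n + 3 * k + 2) - Gc \<gamma> k (n + 1))))"
proof -
  have "\<forall>k n. \<exists>R. Jt \<gamma> k n = fps_to_fls (fser \<gamma> + fps_X ^ (n + 3 * k + 1) * R)
                   \<and> R $ 0 = Cc \<gamma> k n"
    using Jt_remainder[OF nz] by blast
  moreover have "\<forall>k n. theta_den (Jt \<gamma> k) n \<noteq> 0"
    using Jt_Suc_remainder(1)[OF nz nz Jt_remainder[OF nz]] by blast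
  ultimately show ?thesis
    using Jt_expansion[OF nz] Gc_0 Gc_1 Gc_Suc by blast
qed

end
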